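(* Let $\mathbb{K}$ be a field, $\frac12\le s<1$, and $d=\lceil sn\rceil<n$. Then for every fixed $0<p<1$, $$\mathbb{P}\big(Y\in Y_d(n,p): A_Y\text{ fails the WLP}\big)\ \ge\ \mathbb{P}\big(Y\in Y_d(n,p): \tilde H_d(Y;\mathbb{K})\neq0\big).$$
   Context: For $d\ge1$, $Y_d(n,p)$ is the probability space of simplicial complexes $Y$ on vertex set $[n]$ with $\Delta_n^{(d-1)}\subseteq Y\subseteq\Delta_n^{(d)}$, where $\Delta_n^{(k)}$ is the complex of all subsets of $[n]$ of size at most $k+1$, with $\mathbb{P}(Y)=p^{f_d}(1-p)^{\binom{n}{d+1}-f_d}$, $f_d$ being the number of $d$-dimensional faces of $Y$ (i.e. each $d$-face is included independently with probability $p$). $A_Y=\mathbb{K}[x_1,\dots,x_n]/(I_Y+(x_1^{d+2},\dots,x_n^{d+2}))$, where $I_Y$ is the Stanley–Reisner ideal of $Y$. An artinian graded algebra $A$ with top nonzero degree $D$ has the weak Lefschetz property (WLP) if there is a linear form $\ell$ with $\times\ell:A_i\to A_{i+1}$ of full rank for all $i<D$. *)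

theory Defs
  imports Complex_Main
begin

definition d_faces :: "nat \<Rightarrow> nat \<Rightarrow> nat set set" where
  "d_faces n d = {S. S \<subseteq> {1..n} \<and> card S = d + 1}"

text \<open>The complex with complete (d-1)-skeleton (all subsets of size at most d,
  including the empty face) together with the chosen set F of d-faces.\<close>
definition cplx :: "nat \<Rightarrow> nat \<Rightarrow> nat set set \<Rightarrow> nat set set" where
  "cplx n d F = {S. S \<subseteq> {1..n} \<and> card S \<le> d} \<union> F"

definition Yprob :: "nat \<Rightarrow> nat \<Rightarrow> real \<Rightarrow> (nat set set \<Rightarrow> bool) \<Rightarrow> real" where
  "Yprob n d p P =
     (\<Sum>F\<in>Pow (d_faces n d).
        if P (cplx n d F) then p ^ card F * (1 - p) ^ (card (d_faces n d) - card F) else 0)"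

section \<open>The artinian algebra A_Y = K[x_1..x_n]/(I_Y + (x_1^e,...,x_n^e))\<close>

text \<open>Monomial K-basis of the degree-i part: exponent vectors a supported in [n],
  with all exponents < e (not in (x_j^e)) and support a face of Y (not in I_Y).\<close>
definition SR_basis :: "nat \<Rightarrow> nat \<Rightarrow> nat set set \<Rightarrow> nat \<Rightarrow> (nat \<Rightarrow> nat) set" where
  "SR_basis n e Y i = {a. (\<forall>j. j \<notin> {1..n} \<longrightarrow> a j = 0) \<and> (\<forall>j. a j < e)
       \<and> {j. a j \<noteq> 0} \<in> Y \<and> (\<Sum>j\<in>{1..n}. a j) = i}"

text \<open>Elements of the degree-i part A_i, as coefficient functions on the basis.\<close>
definition elem_space :: "'k::field itself \<Rightarrow> nat \<Rightarrow> nat \<Rightarrow> nat set set \<Rightarrow> nat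
     \<Rightarrow> ((nat \<Rightarrow> nat) \<Rightarrow> 'k) set" where
  "elem_space K n e Y i = {f. \<forall>a. a \<notin> SR_basis n e Y i \<longrightarrow> f a = 0}"

text \<open>Multiplication by the linear form l = sum_j c_j x_j, as a map A_i -> A_(i+1).\<close>
definition mult_lin :: "nat \<Rightarrow> nat \<Rightarrow> nat set set \<Rightarrow> nat \<Rightarrow> (nat \<Rightarrow> 'k::field)
     \<Rightarrow> ((nat \<Rightarrow> nat) \<Rightarrow> 'k) \<Rightarrow> ((nat \<Rightarrow> nat) \<Rightarrow> 'k)" where
  "mult_lin n e Y i c f = (\<lambda>b. if b \<in> SR_basis n e Y (i + 1) then
      (\<Sum>j\<in>{j\<in>{1..n}. 0 < b j}.
          if b(j := b j - 1) \<in> SR_basis n e Y i then c j * f (b(j := b j - 1)) else 0)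
     else 0)"

text \<open>A linear map between finite-dimensional spaces has full rank iff it is
  injective or surjective.\<close>
definition full_rank_mult :: "'k::field itself \<Rightarrow> nat \<Rightarrow> nat \<Rightarrow> nat set set \<Rightarrow> nat
     \<Rightarrow> (nat \<Rightarrow> 'k) \<Rightarrow> bool" where
  "full_rank_mult K n e Y i c \<longleftrightarrow>
     (\<forall>f\<in>elem_space K n e Y i. mult_lin n e Y i c f = (\<lambda>_. 0) \<longrightarrow> f = (\<lambda>_. 0))
   \<or> (\<forall>g\<in>elem_space K n e Y (i + 1). \<exists>f\<in>elem_space K n e Y i. mult_lin n e Y i c f = g)"

definition top_deg :: "nat \<Rightarrow> nat \<Rightarrow> nat set set \<Rightarrow> nat" where
  "top_deg n e Y = Max {i. SR_basis n e Y i \<noteq> {}}"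

definition has_WLP :: "'k::field itself \<Rightarrow> nat \<Rightarrow> nat \<Rightarrow> nat set set \<Rightarrow> bool" where
  "has_WLP K n e Y \<longleftrightarrow> (\<exists>c :: nat \<Rightarrow> 'k. \<forall>i < top_deg n e Y. full_rank_mult K n e Y i c)"

text \<open>k-chains: K-valued functions on k-faces (card k+1), oriented by the vertex order.\<close>
definition chains :: "'k::field itself \<Rightarrow> nat set set \<Rightarrow> nat \<Rightarrow> (nat set \<Rightarrow> 'k) set" where
  "chains K Y k = {c. \<forall>\<sigma>. c \<sigma> \<noteq> 0 \<longrightarrow> \<sigma> \<in> Y \<and> card \<sigma> = k + 1}"

text \<open>Simplicial boundary of a k-chain (k \<ge> 1 gives a (k-1)-chain; for k = 0 it is the
  augmentation onto the empty face, giving reduced homology).\<close>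
definition boundary :: "nat set set \<Rightarrow> nat \<Rightarrow> (nat set \<Rightarrow> 'k::field) \<Rightarrow> (nat set \<Rightarrow> 'k)" where
  "boundary Y k c = (\<lambda>\<sigma>. if \<sigma> \<in> Y \<and> card \<sigma> = k then
      (\<Sum>v\<in>{v. v \<notin> \<sigma> \<and> insert v \<sigma> \<in> Y}. (-1) ^ card {u\<in>\<sigma>. u < v} * c (insert v \<sigma>))
     else 0)"

definition reduced_homology_nonzero :: "'k::field itself \<Rightarrow> nat set set \<Rightarrow> nat \<Rightarrow> bool" where
  "reduced_homology_nonzero K Y k \<longleftrightarrow>
     (\<exists>z\<in>chains K Y k. boundary Y k z = (\<lambda>_. 0)
        \<and> \<not> (\<exists>w\<in>chains K Y (k + 1). boundary Y (k + 1) w = z))"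

end

theory Submission
  imports Defs
begin

text \<open>
  Let m = (d+1)(d+2)/2, the degree of the monomials x^b whose exponent vector b restricts to a
  bijection from a d-face onto {1, ..., d+1}. Counted face by face, dim A_i is a sum of numbers of
  compositions of i, which are symmetric and unimodal in i; as n \<le> 2d+1 there are no more d-faces
  than (d-1)-faces, and this yields dim A_m \<le> dim A_(m-1).

  Given a linear form l = \<Sum> c_j x_j and a nonzero d-cycle z, the functional
  Phi(x^b) = sign(b) z(supp b) \<Prod> c_k^(d+1-b_k) on these monomials annihilates l A_(m-1): for a
  monomial x^a of degree m - 1 supported on a d-face, the two nonzero terms of Phi(l x^a) come
  from exponent vectors differing by a transposition of adjacent values and cancel; for x^a
  supported on a (d-1)-face, Phi(l x^a) is a multiple of a coefficient of the boundary of z.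
  Variables with c_k = 0 are handled by a maximal set S of them contained in a face of z, which
  is forced onto the largest exponents; this keeps Phi nonzero. Hence multiplication by l from
  degree m - 1 to m is neither surjective nor, by the dimension count, injective: every complex
  with nonvanishing H_d fails the WLP, and the probabilities compare complex by complex.
\<close>

section \<open>Multiplication by a linear form\<close>

lemma exists_nontrivial_relation:
  fixes w :: "'a \<Rightarrow> 'b \<Rightarrow> 'k::field"
  assumes "finite T" "finite S" "card T < card S"
    and "\<And>s t. s \<in> S \<Longrightarrow> t \<notin> T \<Longrightarrow> w s t = 0"
  shows "\<exists>l. (\<exists>s\<in>S. l s \<noteq> 0) \<and> (\<forall>t. (\<Sum>s\<in>S. l s * w s t) = 0)"
  using assms
proof (induction T arbitrary: S w rule: finite_induct)
  case empty
  then obtain s0 where "s0 \<in> S" by fastforce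
  with empty.prems show ?case by (intro exI[of _ "\<lambda>_. 1"]) auto
next
  case (insert t1 T)
  show ?case
  proof (cases "\<forall>s\<in>S. w s t1 = 0")
    case True
    have "card T < card S" using insert.prems(2) insert.hyps by simp
    moreover have "w s t = 0" if "s \<in> S" "t \<notin> T" for s t
      using True that insert.prems(3) by (cases "t = t1") auto
    ultimately show ?thesis by (rule insert.IH[OF insert.prems(1)])
  next
    case False
    then obtain s1 where s1: "s1 \<in> S" "w s1 t1 \<noteq> 0" by blast
    \<comment> \<open>Gaussian elimination: clear the coordinate t1 with the pivot s1, recurse on S - {s1}.\<close>
    define w' where "w' = (\<lambda>s t. w s t - (w s t1 / w s1 t1) * w s1 t)"
    have "card T < card (S - {s1})"
      using insert.prems(1,2) insert.hyps s1(1) by simp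
    moreover have "w' s t = 0" if "s \<in> S - {s1}" "t \<notin> T" for s t
      using that s1 insert.prems(3)[of s t] insert.prems(3)[of s1 t] by (cases "t = t1") (auto simp: w'_def)
    ultimately obtain l' where l': "\<exists>s\<in>S - {s1}. l' s \<noteq> 0" "\<forall>t. (\<Sum>s\<in>S - {s1}. l' s * w' s t) = 0"
      using insert.IH[of "S - {s1}" w'] insert.prems(1) by blast
    define l where "l = l'(s1 := - (\<Sum>s\<in>S - {s1}. l' s * (w s t1 / w s1 t1)))"
    have "(\<Sum>s\<in>S. l s * w s t) = (\<Sum>s\<in>S - {s1}. l' s * w' s t)" for t
    proof -
      have "(\<Sum>s\<in>S. l s * w s t) = l s1 * w s1 t + (\<Sum>s\<in>S - {s1}. l' s * w s t)"
        using s1(1) insert.prems(1) by (simp add: sum.remove l_def)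
      also have "l s1 * w s1 t = - (\<Sum>s\<in>S - {s1}. l' s * (w s t1 / w s1 t1) * w s1 t)"
        by (simp add: l_def sum_distrib_right)
      also have "- (\<Sum>s\<in>S - {s1}. l' s * (w s t1 / w s1 t1) * w s1 t) + (\<Sum>s\<in>S - {s1}. l' s * w s t)
          = (\<Sum>s\<in>S - {s1}. l' s * w' s t)"
        by (simp add: w'_def sum_subtractf[symmetric] algebra_simps)
      finally show ?thesis .
    qed
    with l' show ?thesis by (intro exI[of _ l]) (auto simp: l_def)
  qed
qed

lemma mult_lin_eq_sum_basis:
  fixes c :: "nat \<Rightarrow> 'k::field"
  assumes fin: "finite (SR_basis n e Y i)"
  shows "mult_lin n e Y i c f b
    = (\<Sum>s\<in>SR_basis n e Y i. f s * mult_lin n e Y i c (\<lambda>a. if a = s then 1 else 0) b)"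
proof (cases "b \<in> SR_basis n e Y (i + 1)")
  case False
  then show ?thesis by (simp add: mult_lin_def)
next
  case True
  let ?J = "{j\<in>{1..n}. 0 < b j}" and ?S = "SR_basis n e Y i"
  have delta: "(\<Sum>s\<in>?S. f s * (if a \<in> ?S then c j * (if a = s then 1 else 0) else 0))
      = (if a \<in> ?S then c j * f a else 0)" for a j
    using fin by (cases "a \<in> ?S") (simp_all add: mult_ac if_distrib[of "\<lambda>x. _ * x"] cong: if_cong)
  have "(\<Sum>s\<in>?S. f s * mult_lin n e Y i c (\<lambda>a. if a = s then 1 else 0) b)
      = (\<Sum>j\<in>?J. \<Sum>s\<in>?S. f s * (if b(j := b j - 1) \<in> ?S
            then c j * (if b(j := b j - 1) = s then 1 else 0) else 0))"
    using True by (simp add: mult_lin_def sum_distrib_left) (rule sum.swap)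
  also have "\<dots> = mult_lin n e Y i c f b"
    using True by (simp only: delta mult_lin_def if_True)
  finally show ?thesis by simp
qed

lemma sum_mult_lin_single:
  assumes "finite (SR_basis n e Y (i + 1))" "t0 \<in> SR_basis n e Y (i + 1)"
    and "\<And>t. t \<noteq> t0 \<Longrightarrow> mult_lin n e Y i c f t = 0"
  shows "(\<Sum>t\<in>SR_basis n e Y (i + 1). Phi t * mult_lin n e Y i c f t) = Phi t0 * mult_lin n e Y i c f t0"
  using sum.mono_neutral_right[OF assms(1), of "{t0}" "\<lambda>t. Phi t * mult_lin n e Y i c f t"] assms(2,3)
  by simp

lemma mult_lin_not_surj_if_annihilated:
  fixes c :: "nat \<Rightarrow> 'k::field" and Phi :: "(nat \<Rightarrow> nat) \<Rightarrow> 'k"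
  assumes fT: "finite (SR_basis n e Y (i + 1))"
    and t0: "t0 \<in> SR_basis n e Y (i + 1)" "Phi t0 \<noteq> 0"
    and orth: "\<And>f. f \<in> elem_space TYPE('k) n e Y i \<Longrightarrow>
      (\<Sum>t\<in>SR_basis n e Y (i + 1). Phi t * mult_lin n e Y i c f t) = 0"
  shows "\<not> (\<forall>g\<in>elem_space TYPE('k) n e Y (i + 1). \<exists>f\<in>elem_space TYPE('k) n e Y i. mult_lin n e Y i c f = g)"
proof
  assume surj: "\<forall>g\<in>elem_space TYPE('k) n e Y (i + 1). \<exists>f\<in>elem_space TYPE('k) n e Y i. mult_lin n e Y i c f = g"
  have "(\<lambda>b. if b = t0 then 1 else 0) \<in> elem_space TYPE('k) n e Y (i + 1)"
    using t0(1) by (auto simp: elem_space_def)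
  then obtain f where f: "f \<in> elem_space TYPE('k) n e Y i" "mult_lin n e Y i c f = (\<lambda>b. if b = t0 then 1 else 0)"
    using surj by blast
  then show False
    using orth[OF f(1)] sum_mult_lin_single[OF fT t0(1), of c f Phi] t0(2) by simp
qed

lemma mult_lin_not_inj_if_annihilated:
  fixes c :: "nat \<Rightarrow> 'k::field" and Phi :: "(nat \<Rightarrow> nat) \<Rightarrow> 'k"
  assumes fS: "finite (SR_basis n e Y i)" and fT: "finite (SR_basis n e Y (i + 1))"
    and card: "card (SR_basis n e Y (i + 1)) \<le> card (SR_basis n e Y i)"
    and t0: "t0 \<in> SR_basis n e Y (i + 1)" "Phi t0 \<noteq> 0"
    and orth: "\<And>f. f \<in> elem_space TYPE('k) n e Y i \<Longrightarrow>
      (\<Sum>t\<in>SR_basis n e Y (i + 1). Phi t * mult_lin n e Y i c f t) = 0"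
  shows "\<not> (\<forall>f\<in>elem_space TYPE('k) n e Y i. mult_lin n e Y i c f = (\<lambda>_. 0) \<longrightarrow> f = (\<lambda>_. 0))"
proof -
  let ?S = "SR_basis n e Y i" and ?T = "SR_basis n e Y (i + 1)"
  let ?ml = "mult_lin n e Y i c"
  \<comment> \<open>The images of the card ?S basis vectors, restricted to the card ?T - 1 coordinates other
    than t0, satisfy a nontrivial relation; orthogonality to Phi then kills the t0-coordinate too.\<close>
  define w where "w = (\<lambda>s t. if t = t0 then 0 else ?ml (\<lambda>a. if a = s then (1::'k) else 0) t)"
  have card_lt: "card (?T - {t0}) < card ?S"
    using card t0(1) fT by (metis card_Diff1_less dual_order.strict_trans1)
  have w_out: "w s t = 0" if "s \<in> ?S" "t \<notin> ?T - {t0}" for s t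
    using that by (auto simp: w_def mult_lin_def)
  have "\<exists>l. (\<exists>s\<in>?S. l s \<noteq> 0) \<and> (\<forall>t. (\<Sum>s\<in>?S. l s * w s t) = 0)"
    by (rule exists_nontrivial_relation[OF finite_Diff[OF fT] fS card_lt w_out])
  then obtain l where l: "\<exists>s\<in>?S. l s \<noteq> 0" "\<forall>t. (\<Sum>s\<in>?S. l s * w s t) = 0"
    by metis
  define f where "f = (\<lambda>a. if a \<in> ?S then l a else 0)"
  have f_elem: "f \<in> elem_space TYPE('k) n e Y i" by (simp add: f_def elem_space_def)
  have "f \<noteq> (\<lambda>_. 0)" using l(1) by (auto simp: f_def fun_eq_iff)
  have ml_f: "?ml f t = (\<Sum>s\<in>?S. l s * ?ml (\<lambda>a. if a = s then 1 else 0) t)" for t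
    using mult_lin_eq_sum_basis[OF fS, of c f t] by (simp add: f_def)
  have off_t0: "?ml f t = 0" if "t \<noteq> t0" for t
    using l(2)[rule_format, of t] that by (simp add: ml_f w_def)
  then have "Phi t0 * ?ml f t0 = 0"
    using orth[OF f_elem] sum_mult_lin_single[OF fT t0(1), of c f Phi] by simp
  then have "?ml f = (\<lambda>_. 0)" using t0(2) off_t0 by (metis mult_eq_0_iff)
  with f_elem \<open>f \<noteq> (\<lambda>_. 0)\<close> show ?thesis by blast
qed

lemma not_full_rank_mult_if_annihilated:
  fixes c :: "nat \<Rightarrow> 'k::field" and Phi :: "(nat \<Rightarrow> nat) \<Rightarrow> 'k"
  assumes "finite (SR_basis n e Y i)" "finite (SR_basis n e Y (i + 1))"
    and "card (SR_basis n e Y (i + 1)) \<le> card (SR_basis n e Y i)"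
    and "t0 \<in> SR_basis n e Y (i + 1)" "Phi t0 \<noteq> 0"
    and "\<And>f. f \<in> elem_space TYPE('k) n e Y i \<Longrightarrow>
      (\<Sum>t\<in>SR_basis n e Y (i + 1). Phi t * mult_lin n e Y i c f t) = 0"
  shows "\<not> full_rank_mult TYPE('k) n e Y i c"
  using mult_lin_not_inj_if_annihilated[OF assms] mult_lin_not_surj_if_annihilated[OF assms(2,4-6)]
  unfolding full_rank_mult_def by blast

lemma le_top_deg:
  assumes "a \<in> SR_basis n e Y i"
  shows "i \<le> top_deg n e Y"
proof -
  have "{i. SR_basis n e Y i \<noteq> {}} \<subseteq> {..n * e}"
  proof
    fix i assume "i \<in> {i. SR_basis n e Y i \<noteq> {}}"
    then obtain b where b: "b \<in> SR_basis n e Y i" by blast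
    then have "i = (\<Sum>j\<in>{1..n}. b j)" and "\<forall>j. b j < e" by (auto simp: SR_basis_def)
    moreover have "(\<Sum>j\<in>{1..n}. b j) \<le> (\<Sum>j\<in>{1..n}. e)"
      using calculation(2) by (intro sum_mono) (simp add: less_imp_le)
    ultimately show "i \<in> {..n * e}" by simp
  qed
  then have "finite {i. SR_basis n e Y i \<noteq> {}}" by (rule finite_subset) simp
  then show ?thesis unfolding top_deg_def using assms by (intro Max_ge) auto
qed

lemma sum_mult_lin_transpose:
  fixes c :: "nat \<Rightarrow> 'k::field" and Phi :: "(nat \<Rightarrow> nat) \<Rightarrow> 'k"
  assumes fS: "finite (SR_basis n e Y i)" and fT: "finite (SR_basis n e Y (i + 1))"
    and f: "f \<in> elem_space TYPE('k) n e Y i"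
    and Phi: "\<And>b. Phi b \<noteq> 0 \<Longrightarrow> b \<in> SR_basis n e Y (i + 1)"
  shows "(\<Sum>b\<in>SR_basis n e Y (i + 1). Phi b * mult_lin n e Y i c f b)
    = (\<Sum>a\<in>SR_basis n e Y i. f a * (\<Sum>j\<in>{1..n}. c j * Phi (a(j := a j + 1))))"
proof -
  let ?S = "SR_basis n e Y i" and ?T = "SR_basis n e Y (i + 1)"
  let ?term = "\<lambda>j b. if 0 < b j then Phi b * (c j * f (b(j := b j - 1))) else 0"
  have f_out: "f a = 0" if "a \<notin> ?S" for a
    using f that unfolding elem_space_def by blast
  have mult_lin_expand: "Phi b * mult_lin n e Y i c f b = (\<Sum>j\<in>{1..n}. ?term j b)" if "b \<in> ?T" for b
  proof -
    have "mult_lin n e Y i c f b = (\<Sum>j\<in>{j\<in>{1..n}. 0 < b j}. c j * f (b(j := b j - 1)))"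
      using that f_out by (auto simp: mult_lin_def intro: sum.cong)
    also have "\<dots> = (\<Sum>j\<in>{1..n}. if 0 < b j then c j * f (b(j := b j - 1)) else 0)"
      by (rule sum.inter_filter) simp
    finally show ?thesis
      by (auto simp: sum_distrib_left intro!: sum.cong)
  qed
  have degrees_differ: "b \<notin> ?S" if "b \<in> ?T" for b
    using that by (auto simp: SR_basis_def)
  have shift: "(\<Sum>b\<in>?T. ?term j b) = (\<Sum>a\<in>?S. Phi (a(j := a j + 1)) * (c j * f a))" for j
    by (rule sum.reindex_bij_witness_not_neutral
        [where S' = "{b\<in>?T. b j = 0 \<or> b(j := b j - 1) \<notin> ?S}" and T' = "{a\<in>?S. a(j := a j + 1) \<notin> ?T}"
          and i = "\<lambda>a. a(j := a j + 1)" and j = "\<lambda>b. b(j := b j - 1)"])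
      (use fS fT f_out Phi degrees_differ in \<open>auto simp: fun_eq_iff fun_upd_idem\<close>)
  have "(\<Sum>b\<in>?T. Phi b * mult_lin n e Y i c f b) = (\<Sum>j\<in>{1..n}. \<Sum>b\<in>?T. ?term j b)"
    by (simp add: mult_lin_expand) (rule sum.swap)
  also have "\<dots> = (\<Sum>j\<in>{1..n}. \<Sum>a\<in>?S. Phi (a(j := a j + 1)) * (c j * f a))"
    by (simp only: shift)
  also have "\<dots> = (\<Sum>a\<in>?S. f a * (\<Sum>j\<in>{1..n}. c j * Phi (a(j := a j + 1))))"
    by (subst sum.swap) (simp add: sum_distrib_left algebra_simps)
  finally show ?thesis .
qed

section \<open>Dimensions of the graded pieces\<close>

fun ncomp :: "nat \<Rightarrow> nat \<Rightarrow> int \<Rightarrow> nat" where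
  "ncomp h 0 s = (if s = 0 then 1 else 0)"
| "ncomp h (Suc t) s = (\<Sum>v\<in>{1..h}. ncomp h t (s - int v))"

lemma ncomp_symmetric: "ncomp h t s = ncomp h t (int t * (int h + 1) - s)"
proof (induction t arbitrary: s)
  case 0
  then show ?case by simp
next
  case (Suc t)
  have "ncomp h (Suc t) (int (Suc t) * (int h + 1) - s)
      = (\<Sum>v\<in>{1..h}. ncomp h t (s - int (h + 1 - v)))"
    unfolding ncomp.simps(2)
  proof (rule sum.cong[OF refl])
    fix v assume "v \<in> {1..h}"
    then have "int t * (int h + 1) - (int (Suc t) * (int h + 1) - s - int v) = s - int (h + 1 - v)"
      by (simp add: algebra_simps)
    then show "ncomp h t (int (Suc t) * (int h + 1) - s - int v) = ncomp h t (s - int (h + 1 - v))"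
      by (metis Suc.IH)
  qed
  also have "\<dots> = ncomp h (Suc t) s"
    by (simp, rule sum.reindex_bij_witness[where i="\<lambda>v. h + 1 - v" and j="\<lambda>v. h + 1 - v"]) auto
  finally show ?case by simp
qed

lemma sum_Icc_split_last:
  "1 \<le> h \<Longrightarrow> (\<Sum>v\<in>{1..h}. f (s - int v)) = (\<Sum>v\<in>{1..h-1}. f (s - int v)) + f (s - int h)"
  by (cases h) auto

lemma sum_Icc_shift_first:
  "1 \<le> h \<Longrightarrow> (\<Sum>v\<in>{1..h}. f (s + 1 - int v)) = f s + (\<Sum>v\<in>{1..h-1}. f (s - int v))"
proof (induction h)
  case (Suc h)
  then show ?case
    using sum_Icc_split_last[of h f s] by (cases "h = 0") (auto simp: diff_diff_eq[symmetric] add.assoc)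
qed simp

lemma antimono_int_if_step:
  fixes f :: "int \<Rightarrow> 'a::preorder"
  assumes step: "\<And>s. c \<le> s \<Longrightarrow> f (s + 1) \<le> f s" and "c \<le> y" "y \<le> x"
  shows "f x \<le> f y"
  using \<open>y \<le> x\<close>
proof (induction x rule: int_ge_induct)
  case (step x)
  then show ?case using assms(1)[of x] \<open>c \<le> y\<close> order_trans by fastforce
qed simp

lemma ncomp_step_le:
  assumes "1 \<le> h" and "int t * (int h + 1) \<le> 2 * s"
  shows "ncomp h t (s + 1) \<le> ncomp h t s"
  using assms(2)
proof (induction t arbitrary: s)
  case 0
  then show ?case by simp
next
  case (Suc t)
  \<comment> \<open>The recursion leaves ncomp h t s - ncomp h t (s - h) as the difference at t + 1; it is
    nonnegative since s lies above the centre of the symmetric, unimodal ncomp h t.\<close>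
  have mono: "ncomp h t x \<le> ncomp h t y" if "int t * (int h + 1) \<le> 2 * y" "y \<le> x" for x y
    by (rule antimono_int_if_step[where c = y]) (use Suc.IH that in auto)
  have "ncomp h t s \<le> ncomp h t (s - int h)"
  proof (cases "int t * (int h + 1) \<le> 2 * (s - int h)")
    case True
    then show ?thesis by (intro mono) auto
  next
    case False
    then have "ncomp h t s \<le> ncomp h t (int t * (int h + 1) - (s - int h))"
      using Suc.prems by (intro mono) (auto simp: algebra_simps)
    then show ?thesis by (metis ncomp_symmetric)
  qed
  then show ?case
    using sum_Icc_shift_first[OF assms(1), of "ncomp h t" s] sum_Icc_split_last[OF assms(1), of "ncomp h t" s]
    by simp
qed

lemma ncomp_middle_identity:
  assumes "2 * m = (d + 1) * (d + 2)"
  shows "ncomp (d+1) (d+1) (int m) + ncomp (d+1) d (int m)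
    = ncomp (d+1) (d+1) (int (m - 1)) + ncomp (d+1) d (int (m - 1))"
proof -
  let ?f = "ncomp (d+1) d"
  have m: "2 * int m = int (d + 1) * int (d + 2)"
    using arg_cong[OF assms, of int] by (simp only: of_nat_mult of_nat_numeral)
  then have "int d * (int (d+1) + 1) - (int m - 1 - int (d+1)) = int m"
    by (simp add: algebra_simps)
  then have "?f (int m - 1 - int (d+1)) = ?f (int m)"
    by (metis ncomp_symmetric)
  moreover have "int (m - 1) = int m - 1" using m by (cases m) auto
  ultimately show ?thesis
    using sum_Icc_shift_first[of "d+1" ?f "int m - 1"] sum_Icc_split_last[of "d+1" ?f "int m - 1"] by simp
qed

lemma ncomp_middle_degree_le:
  assumes m: "2 * m = (d + 1) * (d + 2)" and "t \<le> d"
  shows "ncomp (d+1) t (int m) \<le> ncomp (d+1) t (int (m - 1))"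
proof -
  have m_pos: "1 \<le> m" using m by (cases m) auto
  have "int t * (int (d+1) + 1) \<le> int d * (int d + 2)"
    using assms(2) by (intro mult_mono) auto
  also have "\<dots> \<le> 2 * (int m - 1)"
    using arg_cong[OF m, of int] by (simp add: algebra_simps)
  finally show ?thesis
    using ncomp_step_le[of "d+1" t "int m - 1"] m_pos by simp
qed

definition full_support_exps :: "nat \<Rightarrow> nat set \<Rightarrow> int \<Rightarrow> (nat \<Rightarrow> nat) set" where
  "full_support_exps h \<sigma> i = {a. (\<forall>j. j \<notin> \<sigma> \<longrightarrow> a j = 0) \<and> (\<forall>j\<in>\<sigma>. 1 \<le> a j \<and> a j \<le> h)
     \<and> (\<Sum>j\<in>\<sigma>. int (a j)) = i}"

lemma full_support_exps_iff:
  "a \<in> full_support_exps h \<sigma> i \<longleftrightarrow> {j. a j \<noteq> 0} = \<sigma> \<and> (\<forall>j. a j \<le> h) \<and> (\<Sum>j\<in>\<sigma>. int (a j)) = i"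
  unfolding full_support_exps_def by (auto simp: Suc_le_eq)

lemma full_support_exps_insert:
  assumes "finite \<sigma>" "x \<notin> \<sigma>"
  shows "full_support_exps h (insert x \<sigma>) i
    = (\<Union>v\<in>{1..h}. (\<lambda>a. a(x := v)) ` full_support_exps h \<sigma> (i - int v))"
proof (intro set_eqI iffI)
  fix a assume a: "a \<in> full_support_exps h (insert x \<sigma>) i"
  have "(\<Sum>j\<in>\<sigma>. int ((a(x := 0)) j)) = (\<Sum>j\<in>\<sigma>. int (a j))"
    using assms(2) by (intro sum.cong) auto
  then have "a(x := 0) \<in> full_support_exps h \<sigma> (i - int (a x))"
    using a assms by (auto simp: full_support_exps_def)
  moreover have "a x \<in> {1..h}" using a by (auto simp: full_support_exps_def)
  ultimately show "a \<in> (\<Union>v\<in>{1..h}. (\<lambda>a. a(x := v)) ` full_support_exps h \<sigma> (i - int v))"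
    by (intro UN_I[of "a x"] image_eqI[of a _ "a(x := 0)"]) auto
next
  fix a assume "a \<in> (\<Union>v\<in>{1..h}. (\<lambda>a. a(x := v)) ` full_support_exps h \<sigma> (i - int v))"
  then obtain v b where "v \<in> {1..h}" "b \<in> full_support_exps h \<sigma> (i - int v)" "a = b(x := v)"
    by blast
  moreover have "(\<Sum>j\<in>\<sigma>. int (a j)) = (\<Sum>j\<in>\<sigma>. int (b j))"
    using assms(2) \<open>a = b(x := v)\<close> by (intro sum.cong) auto
  ultimately show "a \<in> full_support_exps h (insert x \<sigma>) i"
    using assms by (auto simp: full_support_exps_def)
qed

lemma card_full_support_exps:
  "finite \<sigma> \<Longrightarrow> finite (full_support_exps h \<sigma> i) \<and> card (full_support_exps h \<sigma> i) = ncomp h (card \<sigma>) i"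
proof (induction \<sigma> arbitrary: i rule: finite_induct)
  case empty
  have "full_support_exps h {} i = (if i = 0 then {\<lambda>_. 0} else {})"
    by (auto simp: full_support_exps_def)
  then show ?case by simp
next
  case (insert x \<sigma>)
  let ?part = "\<lambda>v. (\<lambda>a. a(x := v)) ` full_support_exps h \<sigma> (i - int v)"
  have inj: "inj_on (\<lambda>a. a(x := v)) (full_support_exps h \<sigma> j)" for v j
  proof (rule inj_onI)
    fix a b assume "a \<in> full_support_exps h \<sigma> j" "b \<in> full_support_exps h \<sigma> j" "a(x := v) = b(x := v)"
    moreover have "a x = 0" "b x = 0"
      using calculation(1,2) insert.hyps(2) by (auto simp: full_support_exps_def)
    ultimately show "a = b" by (metis fun_upd_triv fun_upd_upd)
  qed
  have fin: "\<forall>v\<in>{1..h}. finite (?part v)"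
    using insert.IH by blast
  have disj: "\<forall>v\<in>{1..h}. \<forall>w\<in>{1..h}. v \<noteq> w \<longrightarrow> ?part v \<inter> ?part w = {}"
    by (auto dest: fun_cong[where x = x])
  have "card (full_support_exps h (insert x \<sigma>) i) = (\<Sum>v\<in>{1..h}. card (?part v))"
    unfolding full_support_exps_insert[OF insert.hyps] by (rule card_UN_disjoint[OF _ fin disj]) simp
  also have "\<dots> = (\<Sum>v\<in>{1..h}. ncomp h (card \<sigma>) (i - int v))"
    using insert.IH by (intro sum.cong) (auto simp: card_image[OF inj])
  finally show ?case
    using insert.hyps fin by (simp add: full_support_exps_insert)
qed

lemma SR_basis_eq_UN_full_support_exps:
  assumes Y: "Y \<subseteq> Pow {1..n}"
  shows "SR_basis n (h+1) Y i = (\<Union>\<sigma>\<in>Y. full_support_exps h \<sigma> (int i))"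
proof (intro set_eqI iffI)
  have degree_iff: "(\<Sum>j\<in>{1..n}. a j) = i \<longleftrightarrow> (\<Sum>j\<in>\<sigma>. int (a j)) = int i"
    if "{j. a j \<noteq> 0} = \<sigma>" "\<sigma> \<in> Y" for a \<sigma>
  proof -
    have "(\<Sum>j\<in>{1..n}. int (a j)) = (\<Sum>j\<in>\<sigma>. int (a j))"
      using that Y by (intro sum.mono_neutral_right) auto
    then show ?thesis by (metis of_nat_eq_iff of_nat_sum)
  qed
  fix a
  show "a \<in> (\<Union>\<sigma>\<in>Y. full_support_exps h \<sigma> (int i))" if "a \<in> SR_basis n (h+1) Y i"
    using that degree_iff[OF refl] by (auto simp: SR_basis_def full_support_exps_iff less_Suc_eq_le)
  show "a \<in> SR_basis n (h+1) Y i" if "a \<in> (\<Union>\<sigma>\<in>Y. full_support_exps h \<sigma> (int i))"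
    using that degree_iff Y by (fastforce simp: SR_basis_def full_support_exps_iff less_Suc_eq_le)
qed

lemma card_SR_basis:
  assumes Y: "Y \<subseteq> Pow {1..n}"
  shows "finite (SR_basis n (h+1) Y i) \<and> card (SR_basis n (h+1) Y i) = (\<Sum>\<sigma>\<in>Y. ncomp h (card \<sigma>) (int i))"
proof -
  have fin_Y: "finite Y" using Y by (rule finite_subset) simp
  have fin_faces: "finite \<sigma>" if "\<sigma> \<in> Y" for \<sigma>
    using that Y by (auto intro: finite_subset)
  have disj: "full_support_exps h \<sigma> (int i) \<inter> full_support_exps h \<tau> (int i) = {}" if "\<sigma> \<noteq> \<tau>" for \<sigma> \<tau>
    using that by (auto simp: full_support_exps_iff)
  show ?thesis
    unfolding SR_basis_eq_UN_full_support_exps[OF Y]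
    using fin_Y fin_faces card_full_support_exps disj by (simp add: card_UN_disjoint)
qed

lemma cplx_subset_Pow: "F \<subseteq> d_faces n d \<Longrightarrow> cplx n d F \<subseteq> Pow {1..n}"
  by (auto simp: cplx_def d_faces_def)

lemma card_SR_basis_cplx:
  assumes F: "F \<subseteq> d_faces n d"
  shows "card (SR_basis n (d+2) (cplx n d F) i)
    = (\<Sum>\<sigma>\<in>{\<sigma>. \<sigma> \<subseteq> {1..n} \<and> card \<sigma> < d}. ncomp (d+1) (card \<sigma>) (int i))
      + (n choose d) * ncomp (d+1) d (int i) + card F * ncomp (d+1) (d+1) (int i)"
proof -
  let ?small = "{\<sigma>. \<sigma> \<subseteq> {1..n} \<and> card \<sigma> < d}" and ?ridges = "{\<sigma>. \<sigma> \<subseteq> {1..n} \<and> card \<sigma> = d}"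
  let ?P = "\<lambda>\<sigma>. ncomp (d+1) (card \<sigma>) (int i)"
  have fin: "finite ?small" "finite ?ridges" "finite F"
    using finite_subset[OF cplx_subset_Pow[OF F]] by (auto simp: cplx_def)
  have F_card: "card \<sigma> = d + 1" if "\<sigma> \<in> F" for \<sigma>
    using that F by (auto simp: d_faces_def)
  have cplx_eq: "cplx n d F = (?small \<union> ?ridges) \<union> F"
    by (auto simp: cplx_def)
  have "card (SR_basis n (d+2) (cplx n d F) i) = sum ?P (cplx n d F)"
    using card_SR_basis[OF cplx_subset_Pow[OF F], of "d+1" i] by (simp add: numeral_2_eq_2)
  also have "\<dots> = sum ?P (?small \<union> ?ridges) + sum ?P F"
    unfolding cplx_eq using fin by (intro sum.union_disjoint) (auto dest: F_card)
  also have "sum ?P (?small \<union> ?ridges) = sum ?P ?small + sum ?P ?ridges"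
    using fin by (intro sum.union_disjoint) auto
  also have "sum ?P ?ridges = (\<Sum>\<sigma>\<in>?ridges. ncomp (d+1) d (int i))"
    by (rule sum.cong) auto
  also have "\<dots> = (n choose d) * ncomp (d+1) d (int i)"
    using n_subsets[of "{1..n}" d] by simp
  also have "sum ?P F = (\<Sum>\<sigma>\<in>F. ncomp (d+1) (d+1) (int i))"
    using F_card by (intro sum.cong) auto
  also have "\<dots> = card F * ncomp (d+1) (d+1) (int i)"
    by (simp only: sum_constant of_nat_id)
  finally show ?thesis .
qed

lemma card_SR_basis_middle_le:
  assumes F: "F \<subseteq> d_faces n d" and "n \<le> 2 * d + 1" and m: "2 * m = (d + 1) * (d + 2)"
  shows "card (SR_basis n (d+2) (cplx n d F) m) \<le> card (SR_basis n (d+2) (cplx n d F) (m - 1))"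
proof -
  let ?P = "ncomp (d+1)"
  \<comment> \<open>Here n \<le> 2d + 1 enters: there are at most as many d-faces as (d-1)-faces.\<close>
  have "card F \<le> n choose (d+1)"
    using F card_mono[of "d_faces n d" F] n_subsets[of "{1..n}" "d+1"] by (auto simp: d_faces_def)
  also have "\<dots> \<le> n choose d"
    using binomial_antimono[of d "d+1" n] \<open>n \<le> 2 * d + 1\<close> by (cases "d + 1 \<le> n") (auto simp: binomial_eq_0)
  finally obtain r where r: "n choose d = card F + r" using le_Suc_ex by blast
  define x x' y y' where "x = ?P d (int m)" and "x' = ?P d (int (m - 1))"
    and "y = ?P (d+1) (int m)" and "y' = ?P (d+1) (int (m - 1))"
  have "x \<le> x'" "y + x = y' + x'"
    using ncomp_middle_degree_le[OF m, of d] ncomp_middle_identity[OF m]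
    by (simp_all add: x_def x'_def y_def y'_def del: ncomp.simps)
  have "(n choose d) * x + card F * y = r * x + card F * (y + x)"
    by (simp add: r algebra_simps)
  also have "\<dots> \<le> r * x' + card F * (y' + x')"
    using \<open>x \<le> x'\<close> \<open>y + x = y' + x'\<close> by simp
  also have "\<dots> = (n choose d) * x' + card F * y'"
    by (simp add: r algebra_simps)
  finally have top: "(n choose d) * x + card F * y \<le> (n choose d) * x' + card F * y'" .
  have low: "(\<Sum>\<sigma>\<in>{\<sigma>. \<sigma> \<subseteq> {1..n} \<and> card \<sigma> < d}. ?P (card \<sigma>) (int m))
      \<le> (\<Sum>\<sigma>\<in>{\<sigma>. \<sigma> \<subseteq> {1..n} \<and> card \<sigma> < d}. ?P (card \<sigma>) (int (m - 1)))"
    using ncomp_middle_degree_le[OF m] by (intro sum_mono) simp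
  show ?thesis
    using add_mono[OF low top] unfolding card_SR_basis_cplx[OF F] x_def x'_def y_def y'_def add.assoc .
qed

section \<open>Exponent vectors that are permutations\<close>

definition supp :: "(nat \<Rightarrow> nat) \<Rightarrow> nat set" where
  "supp a = {j. a j \<noteq> 0}"

definition is_perm_exp :: "nat \<Rightarrow> (nat \<Rightarrow> nat) \<Rightarrow> bool" where
  "is_perm_exp d a \<longleftrightarrow> bij_betw a (supp a) {1..d+1}"

definition on_top :: "nat set \<Rightarrow> (nat \<Rightarrow> nat) \<Rightarrow> bool" where
  "on_top S a \<longleftrightarrow> (\<forall>k\<in>S. \<forall>j. a j \<noteq> 0 \<longrightarrow> j \<notin> S \<longrightarrow> a j < a k)"

definition inversions :: "(nat \<Rightarrow> nat) \<Rightarrow> (nat \<times> nat) set" where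
  "inversions a = {(u, v). u \<in> supp a \<and> v \<in> supp a \<and> u < v \<and> a v < a u}"

definition weight :: "nat \<Rightarrow> nat \<Rightarrow> (nat \<Rightarrow> 'k::field) \<Rightarrow> (nat \<Rightarrow> nat) \<Rightarrow> 'k" where
  "weight n d c a = (\<Prod>k\<in>{k\<in>{1..n}. c k \<noteq> 0}. c k ^ (d + 1 - a k))"

lemma supp_inc [simp]: "supp (a(j := Suc (a j))) = insert j (supp a)"
  unfolding supp_def by auto

lemma finite_inversions: "finite (supp a) \<Longrightarrow> finite (inversions a)"
  unfolding inversions_def by (rule finite_subset[of _ "supp a \<times> supp a"]) auto

lemma weight_nonzero: "weight n d c a \<noteq> 0"
  unfolding weight_def by (subst prod_zero_iff) auto

lemma weight_inc:
  assumes "j \<in> {1..n}" "c j \<noteq> 0" "a j \<le> d"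
  shows "c j * weight n d c (a(j := a j + 1)) = weight n d c a"
proof -
  define K where "K = {k\<in>{1..n}. c k \<noteq> 0}"
  have j: "j \<in> K" and fin: "finite K" using assms by (simp_all add: K_def)
  have weight: "weight n d c x = (\<Prod>k\<in>K. c k ^ (d + 1 - x k))" for x
    unfolding weight_def K_def ..
  have "(\<Prod>k\<in>K - {j}. c k ^ (d + 1 - (a(j := a j + 1)) k)) = (\<Prod>k\<in>K - {j}. c k ^ (d + 1 - a k))"
    by (rule prod.cong) auto
  then have "weight n d c (a(j := a j + 1)) = c j ^ (d - a j) * (\<Prod>k\<in>K - {j}. c k ^ (d + 1 - a k))"
    unfolding weight prod.remove[OF fin j] by simp
  moreover have "weight n d c a = c j ^ (d + 1 - a j) * (\<Prod>k\<in>K - {j}. c k ^ (d + 1 - a k))"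
    unfolding weight by (rule prod.remove[OF fin j])
  moreover have "d + 1 - a j = Suc (d - a j)" using assms(3) by simp
  ultimately show ?thesis by (simp add: mult.assoc)
qed

lemma bij_betw_swap_values:
  assumes "bij_betw b A B" "i \<in> A" "i' \<in> A"
  shows "bij_betw (b(i := b i', i' := b i)) A B"
  using assms unfolding bij_betw_def inj_on_def by (auto simp: image_def)

lemma on_top_swap_values:
  assumes "on_top S b" "i \<notin> S" "i' \<notin> S" "b i \<noteq> 0" "b i' \<noteq> 0"
  shows "on_top S (b(i := b i', i' := b i))"
  using assms unfolding on_top_def by fastforce

lemma sign_inversions_swap:
  assumes fin: "finite (supp b)" and inj: "inj_on b (supp b)"
    and ii: "i \<in> supp b" "i' \<in> supp b" and w: "b i = Suc (b i')"
  shows "(-1::'k::ring_1) ^ card (inversions (b(i := b i', i' := b i))) = - ((-1) ^ card (inversions b))"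
proof -
  let ?b' = "b(i := b i', i' := b i)"
  \<comment> \<open>Since b i and b i' are adjacent values, the swap changes exactly the status of the pair {i, i'}.\<close>
  define p where "p = (min i i', max i i')"
  have i_ne: "i \<noteq> i'" using w by auto
  have same_supp: "supp ?b' = supp b" using ii w unfolding supp_def by auto
  have other_values: "b x \<noteq> b i \<and> b x \<noteq> b i'" if "x \<in> supp b" "x \<noteq> i" "x \<noteq> i'" for x
    using inj ii that unfolding inj_on_def by metis
  have "(u, v) \<in> inversions ?b' \<longleftrightarrow> (u, v) \<in> inversions b" if "(u, v) \<noteq> p" for u v
    using that other_values[of u] other_values[of v] w ii i_ne unfolding inversions_def same_supp p_def
    by (cases "u = i"; cases "u = i'"; cases "v = i"; cases "v = i'") (auto simp: min_def max_def)
  then have rest: "inversions ?b' - {p} = inversions b - {p}" by auto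
  have flip: "p \<in> inversions ?b' \<longleftrightarrow> p \<notin> inversions b"
    using ii w i_ne unfolding inversions_def same_supp p_def by (auto simp: min_def max_def)
  have fin_inv: "finite (inversions b)" "finite (inversions ?b')"
    using fin same_supp finite_inversions by auto
  show ?thesis
  proof (cases "p \<in> inversions b")
    case True
    then have "card (inversions b) = Suc (card (inversions ?b'))"
      using flip rest fin_inv by (metis Diff_empty Diff_insert0 card_Suc_Diff1)
    then show ?thesis by simp
  next
    case False
    then have "card (inversions ?b') = Suc (card (inversions b))"
      using flip rest fin_inv by (metis Diff_empty Diff_insert0 card_Suc_Diff1)
    then show ?thesis by simp
  qed
qed

lemma card_inversions_insert_one:
  assumes fin: "finite (supp a)" and j: "j \<notin> supp a" and big: "\<forall>u\<in>supp a. 2 \<le> a u"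
  shows "card (inversions (a(j := 1))) = card (inversions a) + card {u\<in>supp a. u < j}"
proof -
  have aj: "a j = 0" using j by (simp add: supp_def)
  have above_one: "Suc 0 < a u" if "0 < a u" for u
  proof -
    have "2 \<le> a u" using big that by (simp add: supp_def)
    then show ?thesis by simp
  qed
  have "inversions (a(j := 1)) = inversions a \<union> (\<lambda>u. (u, j)) ` {u\<in>supp a. u < j}"
  proof (rule set_eqI)
    fix p :: "nat \<times> nat"
    obtain u v where p: "p = (u, v)" by (cases p)
    have "supp (a(j := 1)) = insert j (supp a)" by (auto simp: supp_def)
    then show "p \<in> inversions (a(j := 1)) \<longleftrightarrow> p \<in> inversions a \<union> (\<lambda>u. (u, j)) ` {u\<in>supp a. u < j}"
      unfolding p inversions_def using j aj above_one
      by (cases "u = j"; cases "v = j") (auto simp: supp_def less_Suc_eq_le le_less)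
  qed
  moreover have "inversions a \<inter> (\<lambda>u. (u, j)) ` {u\<in>supp a. u < j} = {}"
    using j unfolding inversions_def by auto
  moreover have "card ((\<lambda>u. (u, j)) ` {u\<in>supp a. u < j}) = card {u\<in>supp a. u < j}"
    by (rule card_image) (auto simp: inj_on_def)
  ultimately show ?thesis
    using finite_inversions[OF fin] fin by (simp add: card_Un_disjoint)
qed

lemma bij_betw_insert_one_iff:
  fixes a :: "nat \<Rightarrow> nat"
  assumes "j \<notin> \<sigma>"
  shows "bij_betw (a(j := 1)) (insert j \<sigma>) {1..d+1} \<longleftrightarrow> bij_betw a \<sigma> {2..d+1}"
proof -
  have "bij_betw (a(j := 1)) \<sigma> {2..d+1}
      \<longleftrightarrow> bij_betw (a(j := 1)) (\<sigma> \<union> {j}) ({2..d+1} \<union> {(a(j := 1)) j})"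
    using assms by (intro notIn_Un_bij_betw3) auto
  moreover have "{2..d+1} \<union> {1} = {1..d+1}" by auto
  moreover have "bij_betw (a(j := 1)) \<sigma> {2..d+1} \<longleftrightarrow> bij_betw a \<sigma> {2..d+1}"
    using assms by (intro bij_betw_cong) auto
  ultimately show ?thesis by simp
qed

lemma on_top_insert_one_iff:
  assumes "j \<notin> supp a" "j \<notin> S" "S \<subseteq> supp a" "\<forall>u\<in>supp a. 2 \<le> a u"
  shows "on_top S (a(j := 1)) \<longleftrightarrow> on_top S a"
proof -
  have top_big: "1 < a k" if "k \<in> S" for k
    using assms(3,4) that by fastforce
  have aj: "a j = 0" using assms(1) by (simp add: supp_def)
  have kj: "k \<noteq> j" if "k \<in> S" for k using assms(2) that by blast
  show ?thesis
  proof
    assume top: "on_top S (a(j := 1))"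
    show "on_top S a" unfolding on_top_def
    proof (intro ballI allI impI)
      fix k u assume "k \<in> S" "a u \<noteq> 0" "u \<notin> S"
      moreover have "u \<noteq> j" using \<open>a u \<noteq> 0\<close> aj by auto
      ultimately show "a u < a k" using top kj unfolding on_top_def by (metis fun_upd_other)
    qed
  next
    assume top: "on_top S a"
    show "on_top S (a(j := 1))" unfolding on_top_def
    proof (intro ballI allI impI)
      fix k u assume "k \<in> S" "(a(j := 1)) u \<noteq> 0" "u \<notin> S"
      then show "(a(j := 1)) u < (a(j := 1)) k"
        using top top_big kj unfolding on_top_def by (cases "u = j") auto
    qed
  qed
qed

lemma exists_perm_exp_on_top:
  assumes fin: "finite \<sigma>" and card_\<sigma>: "card \<sigma> = d + 1" and S: "S \<subseteq> \<sigma>"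
  obtains a where "is_perm_exp d a" "supp a = \<sigma>" "on_top S a"
proof -
  \<comment> \<open>Number the vertices of \<sigma> outside S by 1..r and those of S by r+1..d+1.\<close>
  have fin_S: "finite S" using S fin by (rule finite_subset)
  define r where "r = card (\<sigma> - S)"
  have "card S \<le> d + 1" using card_mono[OF fin S] card_\<sigma> by simp
  moreover have "r = card \<sigma> - card S" using card_Diff_subset[OF fin_S S] by (simp add: r_def)
  ultimately have card_S: "card S = d + 1 - r" and "r \<le> d + 1"
    using card_\<sigma> by simp_all
  have "\<exists>g. bij_betw g (\<sigma> - S) {1..r}"
    by (rule finite_same_card_bij) (simp_all add: fin r_def)
  then obtain g1 where g1: "bij_betw g1 (\<sigma> - S) {1..r}" by blast
  have "\<exists>g. bij_betw g S {r+1..d+1}"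
    by (rule finite_same_card_bij) (simp_all add: fin_S card_S)
  then obtain g2 where g2: "bij_betw g2 S {r+1..d+1}" by blast
  define a where "a = (\<lambda>j. if j \<in> S then g2 j else if j \<in> \<sigma> then g1 j else 0)"
  have "bij_betw a (\<sigma> - S) {1..r}" "bij_betw a S {r+1..d+1}"
    using g1 g2 bij_betw_cong[of "\<sigma> - S" a g1] bij_betw_cong[of S a g2] by (simp_all add: a_def)
  from bij_betw_combine[OF this] have "bij_betw a ((\<sigma> - S) \<union> S) ({1..r} \<union> {r+1..d+1})"
    by simp
  moreover have "(\<sigma> - S) \<union> S = \<sigma>" "{1..r} \<union> {r+1..d+1} = {1..d+1}"
    using S \<open>r \<le> d + 1\<close> by auto
  ultimately have bij: "bij_betw a \<sigma> {1..d+1}" by simp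
  have "a j \<noteq> 0 \<longleftrightarrow> j \<in> \<sigma>" for j
    using bij_betw_apply[OF bij, of j] S by (cases "j \<in> \<sigma>") (auto simp: a_def)
  then have supp_a: "supp a = \<sigma>" by (auto simp: supp_def)
  have "a u < a k" if "k \<in> S" "a u \<noteq> 0" "u \<notin> S" for k u
  proof -
    have "u \<in> \<sigma> - S" using that supp_a by (auto simp: supp_def)
    then have "a u \<le> r" using bij_betw_apply[OF g1, of u] by (simp add: a_def)
    moreover have "r < a k" using bij_betw_apply[OF g2, of k] that(1) by (simp add: a_def)
    ultimately show ?thesis by simp
  qed
  then show ?thesis
    using that bij supp_a by (simp add: is_perm_exp_def on_top_def)
qed

section \<open>The functional induced by a cycle\<close>

locale cycle_functional =
  fixes n d :: nat and F :: "nat set set" and c :: "nat \<Rightarrow> 'k::field"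
    and z :: "nat set \<Rightarrow> 'k" and S :: "nat set"
  assumes F: "F \<subseteq> d_faces n d"
    and z_chain: "z \<in> chains TYPE('k) (cplx n d F) d"
    and z_cycle: "boundary (cplx n d F) d z = (\<lambda>_. 0)"
    and S_zero: "\<And>k. k \<in> S \<Longrightarrow> c k = 0"
    and S_maximal: "\<And>k \<sigma>. k \<in> {1..n} \<Longrightarrow> c k = 0 \<Longrightarrow> k \<notin> S \<Longrightarrow> z \<sigma> \<noteq> 0 \<Longrightarrow> \<not> insert k S \<subseteq> \<sigma>"
begin

definition Phi :: "(nat \<Rightarrow> nat) \<Rightarrow> 'k" where
  "Phi a = (if is_perm_exp d a \<and> S \<subseteq> supp a \<and> on_top S a
     then (-1) ^ card (inversions a) * z (supp a) * weight n d c a else 0)"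

lemma cycle_face:
  assumes "z \<sigma> \<noteq> 0"
  shows "\<sigma> \<in> F" "\<sigma> \<subseteq> {1..n}" "card \<sigma> = d + 1"
proof -
  have "\<sigma> \<in> cplx n d F \<and> card \<sigma> = d + 1" using z_chain assms unfolding chains_def by blast
  then show "\<sigma> \<in> F" "card \<sigma> = d + 1" unfolding cplx_def by auto
  then show "\<sigma> \<subseteq> {1..n}" using F unfolding d_faces_def by auto
qed

lemma zero_coeff_in_S:
  assumes "z \<sigma> \<noteq> 0" "S \<subseteq> \<sigma>" "k \<in> \<sigma>" "c k = 0"
  shows "k \<in> S"
proof -
  have "k \<in> {1..n}" using cycle_face(2)[OF assms(1)] assms(3) by blast
  then show ?thesis using S_maximal[of k \<sigma>] assms by blast
qed

lemma Phi_nonzeroD: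
  assumes "Phi b \<noteq> 0"
  shows "is_perm_exp d b" "S \<subseteq> supp b" "on_top S b" "z (supp b) \<noteq> 0"
    "Phi b = (-1) ^ card (inversions b) * z (supp b) * weight n d c b"
  using assms unfolding Phi_def by (auto split: if_splits)

lemma Phi_swap_adjacent:
  assumes Phi_b: "Phi b \<noteq> 0" and ii': "i \<in> supp b" "i' \<in> supp b" "i \<notin> S" "i' \<notin> S"
    and adjacent: "b i = Suc (b i')"
  shows "Phi (b(i := b i', i' := b i))
    = - ((-1) ^ card (inversions b) * z (supp b) * weight n d c (b(i := b i', i' := b i)))"
proof -
  let ?b' = "b(i := b i', i' := b i)"
  note b = Phi_nonzeroD[OF Phi_b]
  have bij: "bij_betw b (supp b) {1..d+1}" using b(1) by (simp add: is_perm_exp_def)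
  have supp_b': "supp ?b' = supp b" using ii' adjacent by (auto simp: supp_def)
  have "b i \<noteq> 0" "b i' \<noteq> 0" using ii' by (auto simp: supp_def)
  then have "Phi ?b' = (-1) ^ card (inversions ?b') * z (supp b) * weight n d c ?b'"
    using bij_betw_swap_values[OF bij ii'(1,2)] on_top_swap_values[OF b(3) ii'(3,4)] b(2)
    by (simp add: Phi_def is_perm_exp_def supp_b')
  moreover have "(-1::'k) ^ card (inversions ?b') = - ((-1) ^ card (inversions b))"
    using bij ii' adjacent bij_betw_finite[OF bij] by (intro sign_inversions_swap) (auto simp: bij_betw_def)
  ultimately show ?thesis by simp
qed

lemma Phi_pair_cancel:
  assumes ii': "i \<in> supp a" "i' \<in> supp a" "i \<noteq> i'" "a i' = a i"
    and i: "i \<in> {1..n}" "c i \<noteq> 0" and Phi_b: "Phi (a(i := a i + 1)) \<noteq> 0"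
  shows "c i * Phi (a(i := a i + 1)) + c i' * Phi (a(i' := a i' + 1)) = 0"
proof -
  define b where "b = a(i := a i + 1)"
  define \<sigma> where "\<sigma> = supp a"
  have supp_b: "supp b = \<sigma>" using ii' by (simp add: b_def \<sigma>_def insert_absorb)
  note b = Phi_nonzeroD[OF Phi_b[folded b_def], unfolded supp_b]
  have i_S: "i \<notin> S" using S_zero i(2) by blast
  \<comment> \<open>Were c i' = 0, maximality of S would put i' into S, above i; but b i = b i' + 1.\<close>
  have i'_S: "i' \<notin> S"
  proof
    assume "i' \<in> S"
    moreover have "b i \<noteq> 0" by (simp add: b_def)
    ultimately have "b i < b i'" using b(3) i_S unfolding on_top_def by blast
    then show False using ii' by (simp add: b_def)
  qed
  have c_i': "c i' \<noteq> 0" using zero_coeff_in_S[OF b(4) b(2)] ii'(2) i'_S by (auto simp: \<sigma>_def)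
  have i'_n: "i' \<in> {1..n}" using cycle_face(2)[OF b(4)] ii'(2) by (auto simp: \<sigma>_def)
  have "bij_betw b \<sigma> {1..d+1}" using b(1) supp_b by (simp add: is_perm_exp_def)
  then have "a i + 1 \<le> d + 1" using bij_betw_apply ii'(1) by (force simp: b_def \<sigma>_def)
  define b' where "b' = b(i := b i', i' := b i)"
  have b'_eq: "a(i' := a i' + 1) = b'" using ii' by (auto simp: b_def b'_def fun_eq_iff)
  have "i \<in> supp b" "i' \<in> supp b" "b i = Suc (b i')"
    using ii' supp_b by (auto simp: \<sigma>_def b_def)
  from Phi_swap_adjacent[OF Phi_b[folded b_def] this(1,2) i_S i'_S this(3)]
  have "Phi b' = - ((-1) ^ card (inversions b) * z \<sigma> * weight n d c b')"
    unfolding b'_def supp_b .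
  moreover have "c i * weight n d c b = weight n d c a" "c i' * weight n d c b' = weight n d c a"
    using weight_inc[of i n c a d] weight_inc[of i' n c a d] i i'_n c_i' \<open>a i + 1 \<le> d + 1\<close> ii'(4)
    by (auto simp: b_def b'_eq[symmetric])
  ultimately have "c i * Phi b + c i' * Phi b' = 0"
    using b(5) by (simp add: algebra_simps)
  then show ?thesis unfolding b_def[symmetric] b'_eq .
qed

lemma Phi_inc_zero_if_repeated_value:
  assumes "u \<in> supp a" "v \<in> supp a" "u \<noteq> v" "a u = a v" "j \<noteq> u" "j \<noteq> v"
  shows "Phi (a(j := a j + 1)) = 0"
proof (rule ccontr)
  assume "Phi (a(j := a j + 1)) \<noteq> 0"
  then have "inj_on (a(j := a j + 1)) (insert j (supp a))"
    using Phi_nonzeroD(1)[of "a(j := a j + 1)"] by (simp add: is_perm_exp_def bij_betw_def)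
  then show False using assms unfolding inj_on_def by (metis fun_upd_other insertCI)
qed

lemma Phi_sum_full_support:
  assumes supp_a: "supp a \<subseteq> {1..n}" "card (supp a) = d + 1"
  shows "(\<Sum>j\<in>{1..n}. c j * Phi (a(j := a j + 1))) = 0"
proof (cases "\<forall>j\<in>{1..n}. c j * Phi (a(j := a j + 1)) = 0")
  case False
  then obtain i where i: "i \<in> {1..n}" "c i \<noteq> 0" "Phi (a(i := a i + 1)) \<noteq> 0" by auto
  define \<sigma> where "\<sigma> = supp a"
  have fin: "finite \<sigma>" using supp_a(1) by (auto simp: \<sigma>_def intro: finite_subset)
  have bij: "bij_betw (a(i := a i + 1)) (insert i \<sigma>) {1..d+1}"
    using Phi_nonzeroD(1)[OF i(3)] by (simp add: is_perm_exp_def \<sigma>_def)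
  \<comment> \<open>Raising the exponent at i must leave the support unchanged, and the old value a i is then
    taken by exactly one other vertex i'.\<close>
  have "i \<in> \<sigma>"
    using bij_betw_same_card[OF bij] fin supp_a(2) by (auto simp: \<sigma>_def card_insert_if split: if_splits)
  then have "a i \<in> (a(i := a i + 1)) ` \<sigma>"
    using bij_betw_imp_surj_on[OF bij] bij_betw_apply[OF bij, of i] by (auto simp: supp_def \<sigma>_def insert_absorb)
  then obtain i' where i': "i' \<in> \<sigma>" "i' \<noteq> i" "a i' = a i" by (auto split: if_splits)
  have i'_n: "i' \<in> {1..n}" using i'(1) supp_a(1) by (auto simp: \<sigma>_def)
  have others: "c j * Phi (a(j := a j + 1)) = 0" if "j \<in> {1..n} - {i, i'}" for j
    using Phi_inc_zero_if_repeated_value[of i a i' j] \<open>i \<in> \<sigma>\<close> i' that by (auto simp: \<sigma>_def)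
  have "(\<Sum>j\<in>{1..n}. c j * Phi (a(j := a j + 1)))
      = c i * Phi (a(i := a i + 1)) + c i' * Phi (a(i' := a i' + 1))"
  proof -
    have "(\<Sum>j\<in>{1..n} - {i, i'}. c j * Phi (a(j := a j + 1))) = 0"
      using others by (intro sum.neutral) blast
    then show ?thesis
      using sum.subset_diff[of "{i, i'}" "{1..n}" "\<lambda>j. c j * Phi (a(j := a j + 1))"] i(1) i'_n i'(2)
      by simp
  qed
  also have "\<dots> = 0"
    using Phi_pair_cancel[OF _ _ _ _ i] \<open>i \<in> \<sigma>\<close> i' by (auto simp: \<sigma>_def)
  finally show ?thesis .
qed (simp add: sum.neutral)

lemma Phi_insert_one:
  assumes j: "j \<notin> supp a" "j \<notin> S" and fin: "finite (supp a)"
  shows "Phi (a(j := 1)) = (if bij_betw a (supp a) {2..d+1} \<and> S \<subseteq> supp a \<and> on_top S a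
      then (-1) ^ (card (inversions a) + card {u\<in>supp a. u < j}) * z (insert j (supp a))
        * weight n d c (a(j := 1))
      else 0)"
proof -
  have supp_j: "supp (a(j := 1)) = insert j (supp a)" by (auto simp: supp_def)
  have S_iff: "S \<subseteq> insert j (supp a) \<longleftrightarrow> S \<subseteq> supp a" using j(2) by blast
  show ?thesis
  proof (cases "bij_betw a (supp a) {2..d+1} \<and> S \<subseteq> supp a")
    case True
    then have big: "\<forall>u\<in>supp a. 2 \<le> a u" by (auto dest: bij_betw_apply)
    show ?thesis
      using True bij_betw_insert_one_iff[OF j(1), of a d] on_top_insert_one_iff[OF j _ big]
        card_inversions_insert_one[OF fin j(1) big]
      unfolding Phi_def is_perm_exp_def supp_j S_iff by simp
  next
    case False
    then show ?thesis
      using bij_betw_insert_one_iff[OF j(1), of a d] unfolding Phi_def is_perm_exp_def supp_j S_iff by auto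
  qed
qed

lemma cycle_sum_nonzero_coeffs:
  assumes "S \<subseteq> \<tau>" "\<tau> \<subseteq> {1..n}" "card \<tau> = d"
  shows "(\<Sum>j\<in>{j\<in>{1..n}. j \<notin> \<tau> \<and> c j \<noteq> 0}. (-1) ^ card {u\<in>\<tau>. u < j} * z (insert j \<tau>)) = 0"
proof -
  let ?t = "\<lambda>j. (-1) ^ card {u\<in>\<tau>. u < j} * z (insert j \<tau>)"
  let ?V = "{v. v \<notin> \<tau> \<and> insert v \<tau> \<in> cplx n d F}"
  have "\<tau> \<in> cplx n d F" using assms by (simp add: cplx_def)
  then have "sum ?t ?V = 0"
    using fun_cong[OF z_cycle, of \<tau>] assms(3) by (simp add: boundary_def)
  moreover have "sum ?t {j\<in>{1..n}. j \<notin> \<tau> \<and> c j \<noteq> 0} = sum ?t ?V"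
  proof (rule sum.mono_neutral_cong)
    have "?V \<subseteq> {1..n}" using F by (auto simp: cplx_def d_faces_def)
    then show "finite ?V" by (rule finite_subset) simp
    \<comment> \<open>A vertex with c v = 0 contributes nothing: z (insert v \<tau>) \<noteq> 0 would contradict the maximality of S.\<close>
    show "?t v = 0" if v: "v \<in> ?V - {j\<in>{1..n}. j \<notin> \<tau> \<and> c j \<noteq> 0}" for v
    proof -
      have "v \<in> {1..n}" "v \<notin> S" "c v = 0" using v assms(1) \<open>?V \<subseteq> {1..n}\<close> by auto
      then have "z (insert v \<tau>) = 0" using S_maximal[of v "insert v \<tau>"] assms(1) by blast
      then show ?thesis by simp
    qed
    show "?t j = 0" if "j \<in> {j\<in>{1..n}. j \<notin> \<tau> \<and> c j \<noteq> 0} - ?V" for j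
      using z_chain that by (auto simp: chains_def)
  qed auto
  ultimately show ?thesis by simp
qed

lemma c_Phi_inc_on_ridge:
  assumes supp_a: "supp a \<subseteq> {1..n}" "card (supp a) = d" and j: "j \<in> {1..n}"
  shows "c j * Phi (a(j := a j + 1)) = (if j \<notin> supp a \<and> c j \<noteq> 0 then
      (if bij_betw a (supp a) {2..d+1} \<and> S \<subseteq> supp a \<and> on_top S a
       then (-1) ^ card (inversions a) * weight n d c a
         * ((-1) ^ card {u\<in>supp a. u < j} * z (insert j (supp a)))
       else 0)
    else 0)"
proof (cases "j \<in> supp a")
  case True
  then have "\<not> is_perm_exp d (a(j := a j + 1))"
    using supp_a(2) by (auto simp: is_perm_exp_def insert_absorb dest: bij_betw_same_card)
  then show ?thesis using True Phi_nonzeroD(1) by auto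
next
  case False
  show ?thesis
  proof (cases "c j = 0")
    case c_j: False
    have "j \<notin> S" using S_zero c_j by blast
    have "a j = 0" using False by (simp add: supp_def)
    have "c j * weight n d c (a(j := 1)) = weight n d c a"
      using weight_inc[of j n c a d] j c_j \<open>a j = 0\<close> by simp
    then show ?thesis
      using Phi_insert_one[of j a] False \<open>j \<notin> S\<close> \<open>a j = 0\<close> c_j supp_a(1)
      by (simp add: power_add algebra_simps finite_subset)
  qed simp
qed

lemma Phi_sum_ridge:
  assumes supp_a: "supp a \<subseteq> {1..n}" "card (supp a) = d"
  shows "(\<Sum>j\<in>{1..n}. c j * Phi (a(j := a j + 1))) = 0"
proof -
  define J where "J = {j\<in>{1..n}. j \<notin> supp a \<and> c j \<noteq> 0}"
  define extendable where "extendable \<longleftrightarrow> bij_betw a (supp a) {2..d+1} \<and> S \<subseteq> supp a \<and> on_top S a"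
  define K where "K = (-1::'k) ^ card (inversions a) * weight n d c a"
  let ?t = "\<lambda>j. (-1) ^ card {u\<in>supp a. u < j} * z (insert j (supp a))"
  have "(\<Sum>j\<in>{1..n}. c j * Phi (a(j := a j + 1)))
      = (\<Sum>j\<in>{1..n}. if j \<notin> supp a \<and> c j \<noteq> 0 then (if extendable then K * ?t j else 0) else 0)"
    using c_Phi_inc_on_ridge[OF supp_a] by (intro sum.cong) (simp_all add: extendable_def K_def)
  also have "\<dots> = (\<Sum>j\<in>J. if extendable then K * ?t j else 0)"
    unfolding J_def by (rule sum.inter_filter[symmetric]) simp
  also have "\<dots> = 0"
  proof (cases extendable)
    case True
    then have "sum ?t J = 0"
      unfolding J_def using cycle_sum_nonzero_coeffs supp_a by (simp add: extendable_def)
    then show ?thesis using True by (simp add: sum_distrib_left[symmetric])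
  qed simp
  finally show ?thesis .
qed

lemma Phi_sum_zero:
  assumes "supp a \<subseteq> {1..n}"
  shows "(\<Sum>j\<in>{1..n}. c j * Phi (a(j := a j + 1))) = 0"
proof -
  consider "card (supp a) = d + 1" | "card (supp a) = d" | "card (supp a) \<noteq> d + 1" "card (supp a) \<noteq> d"
    by blast
  then show ?thesis
  proof cases
    case 3
    have "finite (supp a)" using assms by (auto intro: finite_subset)
    then have "\<not> is_perm_exp d (a(j := a j + 1))" for j
      using 3 by (auto simp: is_perm_exp_def card_insert_if split: if_splits dest!: bij_betw_same_card)
    then have "Phi (a(j := a j + 1)) = 0" for j
      using Phi_nonzeroD(1) by blast
    then show ?thesis by simp
  qed (use assms Phi_sum_full_support Phi_sum_ridge in auto)
qed

lemma Phi_in_SR_basis: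
  assumes m: "2 * m = (d + 1) * (d + 2)" and Phi_b: "Phi b \<noteq> 0"
  shows "b \<in> SR_basis n (d+2) (cplx n d F) m"
proof -
  define \<sigma> where "\<sigma> = supp b"
  have bij: "bij_betw b \<sigma> {1..d+1}" using Phi_nonzeroD(1)[OF Phi_b] by (simp add: is_perm_exp_def \<sigma>_def)
  have face: "\<sigma> \<in> F" "\<sigma> \<subseteq> {1..n}" using cycle_face Phi_nonzeroD(4)[OF Phi_b] by (auto simp: \<sigma>_def)
  have "(\<Sum>j\<in>{1..n}. b j) = (\<Sum>j\<in>\<sigma>. b j)"
    using face(2) by (intro sum.mono_neutral_right) (auto simp: \<sigma>_def supp_def)
  also have "\<dots> = (\<Sum>v\<in>{1..d+1}. v)" by (rule sum.reindex_bij_betw[OF bij])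
  also have "\<dots> = m" using double_gauss_sum_from_Suc_0[of "d+1", where 'a = nat] m by simp
  finally have "(\<Sum>j\<in>{1..n}. b j) = m" .
  moreover have "b j < d + 2" for j
    using bij_betw_apply[OF bij, of j] by (cases "j \<in> \<sigma>") (auto simp: \<sigma>_def supp_def)
  moreover have "b j = 0" if "j \<notin> {1..n}" for j using that face(2) by (auto simp: \<sigma>_def supp_def)
  moreover have "{j. b j \<noteq> 0} \<in> cplx n d F" using face(1) by (simp add: cplx_def \<sigma>_def supp_def)
  ultimately show ?thesis by (simp add: SR_basis_def)
qed

lemma Phi_exists_nonzero:
  assumes z0: "z \<sigma>0 \<noteq> 0" and S0: "S \<subseteq> \<sigma>0"
  obtains a0 where "Phi a0 \<noteq> 0"
proof -
  have "finite \<sigma>0" using cycle_face(2)[OF z0] by (rule finite_subset) simp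
  then obtain a0 where "is_perm_exp d a0" "supp a0 = \<sigma>0" "on_top S a0"
    using exists_perm_exp_on_top[OF _ cycle_face(3)[OF z0] S0] by blast
  then have "Phi a0 = (-1) ^ card (inversions a0) * z \<sigma>0 * weight n d c a0"
    using S0 by (simp add: Phi_def)
  then have "Phi a0 \<noteq> 0" using z0 weight_nonzero[of n d c a0] by simp
  then show ?thesis by (rule that)
qed

lemma not_full_rank_mult_middle:
  assumes "n \<le> 2 * d + 1" and m: "2 * m = (d + 1) * (d + 2)" and Phi_a0: "Phi a0 \<noteq> 0"
  shows "\<not> full_rank_mult TYPE('k) n (d+2) (cplx n d F) (m - 1) c"
proof -
  let ?Y = "cplx n d F"
  have m_pos: "m - 1 + 1 = m" using m by (cases m) auto
  have fin: "finite (SR_basis n (d+2) ?Y i)" for i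
    using card_SR_basis[OF cplx_subset_Pow[OF F], of "d+1" i] by (simp add: numeral_2_eq_2)
  have "(\<Sum>b\<in>SR_basis n (d+2) ?Y m. Phi b * mult_lin n (d+2) ?Y (m - 1) c f b) = 0"
    if "f \<in> elem_space TYPE('k) n (d+2) ?Y (m - 1)" for f
  proof -
    have "(\<Sum>b\<in>SR_basis n (d+2) ?Y m. Phi b * mult_lin n (d+2) ?Y (m - 1) c f b)
        = (\<Sum>a\<in>SR_basis n (d+2) ?Y (m - 1). f a * (\<Sum>j\<in>{1..n}. c j * Phi (a(j := a j + 1))))"
      using sum_mult_lin_transpose[OF fin fin that, of Phi c, unfolded m_pos] Phi_in_SR_basis[OF m] by blast
    also have "\<dots> = 0"
    proof (intro sum.neutral ballI)
      fix a assume "a \<in> SR_basis n (d+2) ?Y (m - 1)"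
      then have "supp a \<subseteq> {1..n}" by (auto simp: SR_basis_def supp_def)
      then show "f a * (\<Sum>j\<in>{1..n}. c j * Phi (a(j := a j + 1))) = 0"
        by (simp only: Phi_sum_zero mult_zero_right)
    qed
    finally show ?thesis .
  qed
  then show ?thesis
    using not_full_rank_mult_if_annihilated[OF fin fin, of "m - 1" a0 Phi, unfolded m_pos]
      Phi_in_SR_basis[OF m Phi_a0] card_SR_basis_middle_le[OF F assms(1) m] Phi_a0 by blast
qed

end

section \<open>Homology obstructs the weak Lefschetz property\<close>

lemma exists_maximal_subset_of_member:
  assumes "finite Z" "\<sigma>0 \<in> Fs"
  obtains S \<sigma> where "S \<subseteq> Z" "\<sigma> \<in> Fs" "S \<subseteq> \<sigma>"
    and "\<And>k \<sigma>'. k \<in> Z \<Longrightarrow> k \<notin> S \<Longrightarrow> \<sigma>' \<in> Fs \<Longrightarrow> \<not> insert k S \<subseteq> \<sigma>'"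
proof -
  let ?Fam = "{T. T \<subseteq> Z \<and> (\<exists>\<sigma>\<in>Fs. T \<subseteq> \<sigma>)}"
  have "?Fam \<subseteq> Pow Z" by blast
  then have fin: "finite ?Fam" using assms(1) by (simp add: finite_subset)
  have ne: "?Fam \<noteq> {}" using assms(2) by blast
  obtain S where S: "S \<in> ?Fam" and max: "\<forall>T\<in>?Fam. S \<le> T \<longrightarrow> S = T"
    using finite_has_maximal[OF fin ne] by blast
  from S obtain \<sigma> where "\<sigma> \<in> Fs" "S \<subseteq> \<sigma>" by blast
  show thesis
  proof (rule that[of S \<sigma>])
    show "\<not> insert k S \<subseteq> \<sigma>'" if "k \<in> Z" "k \<notin> S" "\<sigma>' \<in> Fs" for k \<sigma>'
    proof
      assume "insert k S \<subseteq> \<sigma>'"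
      then have "insert k S \<in> ?Fam" using that S by blast
      then show False using max \<open>k \<notin> S\<close> by blast
    qed
  qed (use S \<open>\<sigma> \<in> Fs\<close> \<open>S \<subseteq> \<sigma>\<close> in blast)+
qed

lemma reduced_homology_imp_not_WLP:
  assumes F: "F \<subseteq> d_faces n d" and "n \<le> 2 * d + 1"
    and H: "reduced_homology_nonzero TYPE('k::field) (cplx n d F) d"
  shows "\<not> has_WLP TYPE('k) n (d+2) (cplx n d F)"
proof
  assume "has_WLP TYPE('k) n (d+2) (cplx n d F)"
  then obtain c :: "nat \<Rightarrow> 'k" where c: "\<And>i. i < top_deg n (d+2) (cplx n d F)
      \<Longrightarrow> full_rank_mult TYPE('k) n (d+2) (cplx n d F) i c"
    unfolding has_WLP_def by blast
  obtain z :: "nat set \<Rightarrow> 'k" where z: "z \<in> chains TYPE('k) (cplx n d F) d"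
    "boundary (cplx n d F) d z = (\<lambda>_. 0)"
    and not_boundary: "\<not> (\<exists>w\<in>chains TYPE('k) (cplx n d F) (d + 1). boundary (cplx n d F) (d + 1) w = z)"
    using H unfolding reduced_homology_nonzero_def by blast
  have "boundary (cplx n d F) (d + 1) (\<lambda>_. 0 :: 'k) = (\<lambda>_. 0)"
    by (simp add: boundary_def fun_eq_iff)
  then have "z \<noteq> (\<lambda>_. 0)"
    using not_boundary by (auto simp: chains_def)
  then obtain \<sigma>1 where "z \<sigma>1 \<noteq> 0" by auto
  then obtain S \<sigma>0 where "S \<subseteq> {k\<in>{1..n}. c k = 0}" "z \<sigma>0 \<noteq> 0" "S \<subseteq> \<sigma>0"
    and S_maximal: "\<And>k \<sigma>. k \<in> {k\<in>{1..n}. c k = 0} \<Longrightarrow> k \<notin> S \<Longrightarrow> z \<sigma> \<noteq> 0 \<Longrightarrow> \<not> insert k S \<subseteq> \<sigma>"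
    using exists_maximal_subset_of_member[of "{k\<in>{1..n}. c k = 0}" \<sigma>1 "{\<sigma>. z \<sigma> \<noteq> 0}"] by auto
  then interpret cycle_functional n d F c z S
    using F z by unfold_locales auto
  obtain a0 where a0: "Phi a0 \<noteq> 0"
    using Phi_exists_nonzero[OF \<open>z \<sigma>0 \<noteq> 0\<close> \<open>S \<subseteq> \<sigma>0\<close>] by blast
  define m where "m = (d + 1) * (d + 2) div 2"
  have m: "2 * m = (d + 1) * (d + 2)" by (simp add: m_def)
  have "m - 1 < top_deg n (d+2) (cplx n d F)"
    using le_top_deg[OF Phi_in_SR_basis[OF m a0]] m by (cases m) auto
  then show False
    using c not_full_rank_mult_middle[OF \<open>n \<le> 2 * d + 1\<close> m a0] by blast
qed

theorem theorem7p3: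
  fixes s p :: real and n d :: nat
  assumes "1/2 \<le> s" and "s < 1" and "d = nat \<lceil>s * real n\<rceil>" and "d < n"
    and "0 < p" and "p < 1"
  shows "Yprob n d p (\<lambda>Y. \<not> has_WLP TYPE('k::field) n (d + 2) Y)
           \<ge> Yprob n d p (\<lambda>Y. reduced_homology_nonzero TYPE('k) Y d)"
proof -
  \<comment> \<open>Only s \<ge> 1/2 matters, through n \<le> 2d + 1; the comparison then holds complex by complex.\<close>
  have "real n / 2 \<le> s * real n"
    using mult_right_mono[OF assms(1), of "real n"] by simp
  moreover have "s * real n \<le> real d"
    using assms(3) calculation by (simp add: le_of_int_ceiling)
  ultimately have "n \<le> 2 * d + 1" by linarith
  show ?thesis
    unfolding Yprob_def
  proof (rule sum_mono)
    fix F :: "nat set set"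
    let ?w = "p ^ card F * (1 - p) ^ (card (d_faces n d) - card F)"
    assume "F \<in> Pow (d_faces n d)"
    moreover have "0 \<le> ?w" using assms(5,6) by simp
    ultimately show "(if reduced_homology_nonzero TYPE('k) (cplx n d F) d then ?w else 0)
        \<le> (if \<not> has_WLP TYPE('k) n (d + 2) (cplx n d F) then ?w else 0)"
      using reduced_homology_imp_not_WLP[of F n d, where 'k = 'k] \<open>n \<le> 2 * d + 1\<close> by auto
  qed
qed

end
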